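(* Let $C$ be a spherical convex body in $S^n$ and let $0<\tau<\pi$. Then $C$ is of constant diameter $\tau$ if and only if its spherical polar $C^\circ$ is of constant diameter $\pi-\tau$.
   Context: $S^n$ is the unit sphere in $\mathbb{R}^{n+1}$, with origin $O$ and Euclidean inner product $\cdot$. The spherical distance of $P,Q\in S^n$ is $|PQ|=\arccos(\overrightarrow{OP}\cdot\overrightarrow{OQ})$. A set $K\subseteq S^n$ is spherically convex if the cone $\{\lambda u:\lambda>0,u\in K\}$ is convex in $\mathbb{R}^{n+1}$. A spherical convex body is a closed, spherically convex subset of $S^n$ with nonempty interior relative to $S^n$. The boundary of $K$ relative to $S^n$ is denoted $\partial K$. For $P\in S^n$, the closed hemisphere centered at $P$ is $S^+_P=\{Q\in S^n:\overrightarrow{OP}\cdot\overrightarrow{OQ}\ge 0\}$. The spherical polar set of $W\subseteq S^n$ is $W^\circ=\bigcap_{P\in W}S^+_P$. The diameter of $K$ is $\max\{|PQ|:P,Q\in K\}$. The body $K$ is of constant diameter $\tau$ if its diameter is $\tau$ and, for every $P\in\partial K$, there is $Q\in K$ with $|PQ|=\tau$. *)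

theory Defs
  imports "HOL-Analysis.Analysis"
begin

text \<open>The unit sphere S^n is modelled as sphere 0 1 in a Euclidean space of
dimension n+1 (an arbitrary euclidean_space type).\<close>

definition sdist :: "'a::euclidean_space \<Rightarrow> 'a \<Rightarrow> real" where
  "sdist P Q = arccos (P \<bullet> Q)"

definition spherically_convex :: "'a::euclidean_space set \<Rightarrow> bool" where
  "spherically_convex K \<longleftrightarrow> K \<subseteq> sphere 0 1 \<and>
     convex {c *\<^sub>R u | c u. c > 0 \<and> u \<in> K}"

definition spherical_convex_body :: "'a::euclidean_space set \<Rightarrow> bool" where
  "spherical_convex_body K \<longleftrightarrow> closed K \<and> spherically_convex K \<and>
     (\<exists>U. openin (top_of_set (sphere 0 1)) U \<and> U \<noteq> {} \<and> U \<subseteq> K)"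

definition sboundary :: "'a::euclidean_space set \<Rightarrow> 'a set" where
  "sboundary K = (top_of_set (sphere (0::'a) 1)) frontier_of K"

definition hemisphere :: "'a::euclidean_space \<Rightarrow> 'a set" where
  "hemisphere P = {Q \<in> sphere 0 1. P \<bullet> Q \<ge> 0}"

definition spolar :: "'a::euclidean_space set \<Rightarrow> 'a set" where
  "spolar W = sphere 0 1 \<inter> (\<Inter>P\<in>W. hemisphere P)"

definition sdiameter :: "'a::euclidean_space set \<Rightarrow> real" where
  "sdiameter K = Sup {sdist P Q | P Q. P \<in> K \<and> Q \<in> K}"

definition constant_diameter :: "'a::euclidean_space set \<Rightarrow> real \<Rightarrow> bool" where
  "constant_diameter K \<tau> \<longleftrightarrow> sdiameter K = \<tau> \<and>
     (\<forall>P\<in>sboundary K. \<exists>Q\<in>K. sdist P Q = \<tau>)"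

end

theory Submission
  imports Defs
begin

text \<open>Distances become inner products: \<open>|PQ| \<le> \<tau>\<close> iff \<open>cos \<tau> \<le> P \<bullet> Q\<close>.  A body \<open>C\<close> of
  constant diameter \<open>\<tau>\<close> is complete: it contains every point within distance \<open>\<tau>\<close> of all of its
  points, because the unit vectors at distance less than \<open>\<tau>\<close> from all of \<open>C\<close> form a connected set
  that meets \<open>C\<close> but not its boundary.  Completeness implies that whenever the hemisphere centred
  at \<open>X \<in> C\<degree>\<close> supports \<open>C\<close> at \<open>P\<close>, the point at distance \<open>\<tau>\<close> from \<open>P\<close> in direction \<open>X\<close>
  lies in \<open>C\<close>.  This yields for every boundary point \<open>X\<close> of \<open>C\<degree>\<close> a point of \<open>C\<degree>\<close> at
  distance \<open>\<pi> - \<tau>\<close>, and it rules out a farthest pair of \<open>C\<degree>\<close> at distance more than \<open>\<pi> - \<tau>\<close>.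
  The converse follows by applying this to the convex body \<open>C\<degree>\<close>, as \<open>C\<degree>\<degree> = C\<close>.\<close>

section \<open>Unit vectors and tilting\<close>

lemma abs_inner_unit_le_1:
  fixes x y :: "'a::real_inner"
  assumes "norm x = 1" "norm y = 1"
  shows "\<bar>x \<bullet> y\<bar> \<le> 1"
  using Cauchy_Schwarz_ineq2[of x y] assms by simp

lemma unit_eq_if_inner_eq_1:
  fixes x y :: "'a::real_inner"
  assumes "norm x = 1" "norm y = 1" "x \<bullet> y = 1"
  shows "x = y"
proof -
  have "(norm (x - y))\<^sup>2 = x \<bullet> x - 2 * (x \<bullet> y) + y \<bullet> y"
    by (simp add: power2_norm_eq_inner inner_diff_left inner_diff_right inner_commute[of y x])
  also have "\<dots> = 0" using assms by (simp add: dot_square_norm)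
  finally show ?thesis by simp
qed

lemma norm_orthonormal_combination:
  fixes A u :: "'a::real_inner"
  assumes "norm A = 1" "norm u = 1" "A \<bullet> u = 0" "a\<^sup>2 + b\<^sup>2 = 1"
  shows "norm (a *\<^sub>R A + b *\<^sub>R u) = 1"
proof -
  have "(a *\<^sub>R A + b *\<^sub>R u) \<bullet> (a *\<^sub>R A + b *\<^sub>R u) = a\<^sup>2 * (A \<bullet> A) + b\<^sup>2 * (u \<bullet> u)"
    using assms(3) by (simp add: inner_add_left inner_add_right inner_commute[of u A] power2_eq_square)
  also have "\<dots> = 1" using assms by (simp add: dot_square_norm)
  finally show ?thesis by (simp add: norm_eq_sqrt_inner)
qed

lemma perp_component:
  fixes P Q :: "'a::real_inner"
  assumes "norm P = 1" "norm Q = 1"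
  shows "P \<bullet> (Q - (P \<bullet> Q) *\<^sub>R P) = 0"
    and "norm (Q - (P \<bullet> Q) *\<^sub>R P) = sqrt (1 - (P \<bullet> Q)\<^sup>2)"
    and "Q \<bullet> sgn (Q - (P \<bullet> Q) *\<^sub>R P) = sqrt (1 - (P \<bullet> Q)\<^sup>2)"
proof -
  define v where "v = Q - (P \<bullet> Q) *\<^sub>R P"
  have PP: "P \<bullet> P = 1" and QQ: "Q \<bullet> Q = 1" using assms by (simp_all add: dot_square_norm)
  show Pv: "P \<bullet> v = 0" by (simp add: v_def inner_diff_right PP)
  have Qv: "Q \<bullet> v = v \<bullet> v" using Pv by (simp add: v_def inner_diff_left inner_commute)
  also have "\<dots> = 1 - (P \<bullet> Q)\<^sup>2"
    using Pv by (simp add: v_def inner_diff_left inner_diff_right QQ inner_commute[of Q P]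
        power2_eq_square)
  finally show nv: "norm v = sqrt (1 - (P \<bullet> Q)\<^sup>2)" using Qv by (simp add: norm_eq_sqrt_inner)
  have "Q \<bullet> v = norm v * norm v" using Qv by (simp add: dot_square_norm power2_eq_square)
  then have "Q \<bullet> sgn v = norm v" by (cases "v = 0") (simp_all add: sgn_div_norm)
  then show "Q \<bullet> sgn v = sqrt (1 - (P \<bullet> Q)\<^sup>2)" using nv by simp
qed

lemma norm_convex_combination_ge:
  fixes X h :: "'a::real_inner"
  assumes "norm X = 1" "norm h = 1" "0 \<le> X \<bullet> h" "0 \<le> t"
  shows "1 - t \<le> norm ((1 - t) *\<^sub>R X + t *\<^sub>R h)"
proof -
  have "1 - t \<le> X \<bullet> ((1 - t) *\<^sub>R X + t *\<^sub>R h)"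
    using assms by (simp add: inner_add_right dot_square_norm)
  also have "\<dots> \<le> norm ((1 - t) *\<^sub>R X + t *\<^sub>R h)"
    using norm_cauchy_schwarz[of X] assms(1) by simp
  finally show ?thesis .
qed

lemma sqrt_one_minus_square_bounds:
  fixes b :: real
  assumes "0 \<le> b" "b \<le> 1"
  shows "1 - b\<^sup>2 \<le> sqrt (1 - b\<^sup>2)" "sqrt (1 - b\<^sup>2) \<le> 1"
proof -
  have x: "0 \<le> 1 - b\<^sup>2" "1 - b\<^sup>2 \<le> 1" using assms by (simp_all add: abs_square_le_1)
  then show le1: "sqrt (1 - b\<^sup>2) \<le> 1" by simp
  have "1 - b\<^sup>2 = sqrt (1 - b\<^sup>2) * sqrt (1 - b\<^sup>2)" using x by simp
  also have "\<dots> \<le> sqrt (1 - b\<^sup>2)" using le1 x by (intro mult_left_le_one_le) auto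
  finally show "1 - b\<^sup>2 \<le> sqrt (1 - b\<^sup>2)" .
qed

lemma sin_add_arccos_neg:
  fixes \<tau> e :: real
  assumes \<tau>: "0 < \<tau>" "\<tau> < pi" and e: "- 1 \<le> e" "e < - cos \<tau>"
  shows "sin \<tau> * e + cos \<tau> * sqrt (1 - e\<^sup>2) < 0"
proof -
  define \<psi> where "\<psi> = arccos e"
  have "e \<le> 1" using e cos_ge_minus_one[of \<tau>] by linarith
  then have "cos \<psi> = e" "sin \<psi> = sqrt (1 - e\<^sup>2)" using e by (simp_all add: \<psi>_def sin_arccos_abs)
  have "arccos (cos (pi - \<tau>)) < \<psi>"
    unfolding \<psi>_def using e by (intro arccos_less_arccos) auto
  then have "pi < \<tau> + \<psi>" using \<tau> arccos_cos[of "pi - \<tau>"] by simp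
  moreover have "\<psi> \<le> pi" using e \<open>e \<le> 1\<close> by (simp add: \<psi>_def arccos_ubound)
  ultimately have "sin (\<tau> + \<psi>) < 0" using \<tau> by (intro sin_lt_zero) auto
  then show ?thesis using \<open>cos \<psi> = e\<close> \<open>sin \<psi> = _\<close> by (simp add: sin_add)
qed

text \<open>For unit vectors \<open>A \<bottom> u\<close>, \<open>tilt A u b\<close> is the point at angle \<open>arcsin b\<close> from \<open>A\<close> on the
  great circle through \<open>A\<close> in direction \<open>u\<close>.\<close>

definition tilt :: "'a::real_vector \<Rightarrow> 'a \<Rightarrow> real \<Rightarrow> 'a" where
  "tilt A u b = sqrt (1 - b\<^sup>2) *\<^sub>R A + b *\<^sub>R u"

lemma norm_tilt:
  fixes A u :: "'a::real_inner"
  assumes "norm A = 1" "norm u = 1" "A \<bullet> u = 0" "0 \<le> b" "b \<le> 1"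
  shows "norm (tilt A u b) = 1"
proof -
  have "(sqrt (1 - b\<^sup>2))\<^sup>2 + b\<^sup>2 = 1" using assms(4,5) by (simp add: abs_square_le_1)
  then show ?thesis unfolding tilt_def using norm_orthonormal_combination assms(1-3) by blast
qed

lemma norm_tilt_minus_le:
  fixes A u :: "'a::real_normed_vector"
  assumes "norm A = 1" "norm u = 1" "0 \<le> b" "b \<le> 1"
  shows "norm (tilt A u b - A) \<le> 2 * b"
proof -
  have "norm (tilt A u b - A) = norm ((sqrt (1 - b\<^sup>2) - 1) *\<^sub>R A + b *\<^sub>R u)"
    by (simp add: tilt_def algebra_simps)
  also have "\<dots> \<le> (1 - sqrt (1 - b\<^sup>2)) + b"
    using norm_triangle_ineq[of "(sqrt (1 - b\<^sup>2) - 1) *\<^sub>R A" "b *\<^sub>R u"]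
      sqrt_one_minus_square_bounds[OF assms(3,4)] assms by simp
  also have "\<dots> \<le> b\<^sup>2 + b" using sqrt_one_minus_square_bounds[OF assms(3,4)] by simp
  also have "\<dots> \<le> 2 * b" using assms by (simp add: power2_eq_square mult_left_le_one_le)
  finally show ?thesis .
qed

lemma inner_tilt_approx:
  fixes A u Z :: "'a::real_inner"
  assumes "norm A = 1" "norm Z = 1" "0 \<le> b" "b \<le> 1"
  shows "\<bar>tilt A u b \<bullet> Z - A \<bullet> Z - b * (u \<bullet> Z)\<bar> \<le> b\<^sup>2"
proof -
  have "tilt A u b \<bullet> Z - A \<bullet> Z - b * (u \<bullet> Z) = (1 - sqrt (1 - b\<^sup>2)) * - (A \<bullet> Z)"
    by (simp add: tilt_def inner_add_left algebra_simps)
  also have "\<bar>\<dots>\<bar> \<le> b\<^sup>2 * 1"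
    unfolding abs_mult using sqrt_one_minus_square_bounds[OF assms(3,4)]
      abs_inner_unit_le_1[OF assms(1,2)] by (intro mult_mono) auto
  finally show ?thesis by simp
qed

section \<open>Spherical convexity and polarity\<close>

lemma spherically_convex_subset_sphere:
  "spherically_convex K \<Longrightarrow> K \<subseteq> sphere 0 1"
  by (simp add: spherically_convex_def)

lemma spherically_convex_sgn_combination:
  fixes K :: "'a::euclidean_space set"
  assumes K: "spherically_convex K" and P: "P \<in> K" and Z: "Z \<in> K"
    and l: "0 \<le> l" and m: "0 \<le> m" and nz: "l *\<^sub>R P + m *\<^sub>R Z \<noteq> 0"
  shows "sgn (l *\<^sub>R P + m *\<^sub>R Z) \<in> K"
proof -
  have unit: "\<And>u. u \<in> K \<Longrightarrow> sgn u = u"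
    using spherically_convex_subset_sphere[OF K] by (auto simp: sgn_div_norm)
  consider "m = 0" | "l = 0" | "0 < l" "0 < m" using l m by linarith
  then show ?thesis
  proof cases
    case 1
    then have "0 < l" using nz l by auto
    then show ?thesis using 1 P unit by (simp add: sgn_scaleR)
  next
    case 2
    then have "0 < m" using nz m by auto
    then show ?thesis using 2 Z unit by (simp add: sgn_scaleR)
  next
    case 3
    define W where "W = {c *\<^sub>R u | c u. c > 0 \<and> u \<in> K}"
    have "convex W" using K by (simp add: spherically_convex_def W_def)
    moreover have "P \<in> W" "Z \<in> W" unfolding W_def using P Z by (auto intro!: exI[of _ 1])
    ultimately have "(l/(l+m)) *\<^sub>R P + (m/(l+m)) *\<^sub>R Z \<in> W"
      using 3 by (intro convexD) (auto simp: add_divide_distrib[symmetric])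
    then obtain c u where cu: "0 < c" "u \<in> K" "(l/(l+m)) *\<^sub>R P + (m/(l+m)) *\<^sub>R Z = c *\<^sub>R u"
      unfolding W_def by auto
    have "l *\<^sub>R P + m *\<^sub>R Z = (l+m) *\<^sub>R ((l/(l+m)) *\<^sub>R P + (m/(l+m)) *\<^sub>R Z)"
      using 3 by (simp add: scaleR_add_right)
    also have "\<dots> = ((l+m) * c) *\<^sub>R u" using cu by simp
    finally show ?thesis using 3 cu unit by (simp add: sgn_scaleR)
  qed
qed

text \<open>The open hemisphere centred at \<open>c\<close> keeps nonnegative combinations away from the origin.\<close>

lemma spherically_convexI:
  fixes K :: "'a::euclidean_space set"
  assumes sphere: "K \<subseteq> sphere 0 1" and pos: "\<And>Y. Y \<in> K \<Longrightarrow> 0 < c \<bullet> Y"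
    and comb: "\<And>X Y l m. X \<in> K \<Longrightarrow> Y \<in> K \<Longrightarrow> 0 \<le> l \<Longrightarrow> 0 \<le> m \<Longrightarrow>
      l *\<^sub>R X + m *\<^sub>R Y \<noteq> 0 \<Longrightarrow> sgn (l *\<^sub>R X + m *\<^sub>R Y) \<in> K"
  shows "spherically_convex K"
  unfolding spherically_convex_def
proof (intro conjI sphere convexI)
  fix x y and u v :: real
  assume x: "x \<in> {t *\<^sub>R X | t X. 0 < t \<and> X \<in> K}" and y: "y \<in> {t *\<^sub>R X | t X. 0 < t \<and> X \<in> K}"
    and uv: "0 \<le> u" "0 \<le> v" "u + v = 1"
  obtain t1 X1 where 1: "x = t1 *\<^sub>R X1" "0 < t1" "X1 \<in> K" using x by blast
  obtain t2 X2 where 2: "y = t2 *\<^sub>R X2" "0 < t2" "X2 \<in> K" using y by blast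
  define z where "z = (u * t1) *\<^sub>R X1 + (v * t2) *\<^sub>R X2"
  have "c \<bullet> z = (u * t1) * (c \<bullet> X1) + (v * t2) * (c \<bullet> X2)" by (simp add: z_def inner_add_right)
  moreover have "0 < (u * t1) * (c \<bullet> X1) \<or> 0 < (v * t2) * (c \<bullet> X2)"
    using uv 1 2 pos[OF 1(3)] pos[OF 2(3)] by (cases "u = 0") auto
  moreover have "0 \<le> (u * t1) * (c \<bullet> X1)" "0 \<le> (v * t2) * (c \<bullet> X2)"
    using uv 1 2 pos[OF 1(3)] pos[OF 2(3)] by auto
  ultimately have "z \<noteq> 0" by auto
  then have "sgn z \<in> K" using comb[OF 1(3) 2(3)] uv 1 2 by (simp add: z_def)
  moreover have "u *\<^sub>R x + v *\<^sub>R y = norm z *\<^sub>R sgn z" "0 < norm z"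
    using \<open>z \<noteq> 0\<close> by (simp_all add: z_def 1 2 sgn_div_norm)
  ultimately show "u *\<^sub>R x + v *\<^sub>R y \<in> {t *\<^sub>R X | t X. 0 < t \<and> X \<in> K}" by blast
qed

lemma convex_hull_subset_cone:
  assumes "spherically_convex K"
  shows "convex hull K \<subseteq> {t *\<^sub>R u | t u. 0 < t \<and> u \<in> K}"
proof (rule hull_minimal)
  show "K \<subseteq> {t *\<^sub>R u | t u. 0 < t \<and> u \<in> K}" by (force intro: exI[of _ 1])
  show "convex {t *\<^sub>R u | t u. 0 < t \<and> u \<in> K}"
    using assms by (simp add: spherically_convex_def)
qed

lemma convex_norm_cone:
  fixes C :: "'a::real_inner set"
  assumes "0 \<le> m"
  shows "convex {y. \<forall>Q\<in>C. m * norm y < y \<bullet> Q}"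
proof (rule convexI)
  fix x y and u v :: real
  assume x: "x \<in> {y. \<forall>Q\<in>C. m * norm y < y \<bullet> Q}" and y: "y \<in> {y. \<forall>Q\<in>C. m * norm y < y \<bullet> Q}"
    and uv: "0 \<le> u" "0 \<le> v" "u + v = 1"
  have "m * norm (u *\<^sub>R x + v *\<^sub>R y) < (u *\<^sub>R x + v *\<^sub>R y) \<bullet> Q" if Q: "Q \<in> C" for Q
  proof -
    have "m * norm (u *\<^sub>R x + v *\<^sub>R y) \<le> m * (u * norm x + v * norm y)"
      using norm_triangle_ineq[of "u *\<^sub>R x" "v *\<^sub>R y"] uv assms by (intro mult_left_mono) auto
    also have "\<dots> = u * (m * norm x) + v * (m * norm y)" by (simp add: algebra_simps)
    also have "\<dots> < u * (x \<bullet> Q) + v * (y \<bullet> Q)"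
    proof (cases "u = 0")
      case True
      then show ?thesis using uv y Q by simp
    next
      case False
      then have "u * (m * norm x) < u * (x \<bullet> Q)" using uv x Q by simp
      moreover have "v * (m * norm y) \<le> v * (y \<bullet> Q)"
        using uv y Q by (intro mult_left_mono) (auto intro: less_imp_le)
      ultimately show ?thesis by simp
    qed
    finally show ?thesis by (simp add: inner_add_left)
  qed
  then show "u *\<^sub>R x + v *\<^sub>R y \<in> {y. \<forall>Q\<in>C. m * norm y < y \<bullet> Q}" by blast
qed

lemma connected_sgn_image:
  fixes S :: "'a::real_normed_vector set"
  assumes "connected S" "0 \<notin> S"
  shows "connected (sgn ` S)"
proof (rule connected_continuous_image[OF _ assms(1)])
  show "continuous_on S sgn"
    using assms(2) continuous_on_sgn[OF continuous_on_id, of S] by auto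
qed

lemma mem_spolar_iff: "X \<in> spolar W \<longleftrightarrow> norm X = 1 \<and> (\<forall>P\<in>W. 0 \<le> P \<bullet> X)"
  by (auto simp: spolar_def hemisphere_def)

lemma spolar_subset_sphere: "spolar W \<subseteq> sphere 0 1"
  by (auto simp: mem_spolar_iff)

lemma closed_spolar: "closed (spolar W)"
proof -
  have "spolar W = sphere 0 1 \<inter> (\<Inter>P\<in>W. {X. 0 \<le> P \<bullet> X})"
    by (auto simp: mem_spolar_iff)
  then show ?thesis by (auto intro!: closed_Int closed_INT closed_halfspace_ge)
qed

lemma compact_spolar: "compact (spolar W)"
  using closed_spolar spolar_subset_sphere
  by (metis bounded_sphere bounded_subset compact_eq_bounded_closed)

definition sinterior :: "'a::euclidean_space set \<Rightarrow> 'a set" where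
  "sinterior K = top_of_set (sphere 0 1) interior_of K"

lemma sinterior_subset: "sinterior K \<subseteq> K"
  by (simp add: sinterior_def interior_of_subset)

lemma sinterior_nonempty:
  assumes "spherical_convex_body K"
  shows "sinterior K \<noteq> {}"
proof -
  obtain U where "openin (top_of_set (sphere 0 1)) U" "U \<noteq> {}" "U \<subseteq> K"
    using assms by (auto simp: spherical_convex_body_def)
  then show ?thesis unfolding sinterior_def using interior_of_maximal by blast
qed

lemma sinterior_ball:
  assumes "X \<in> sinterior K"
  obtains r where "0 < r" "sphere 0 1 \<inter> ball X r \<subseteq> K"
proof -
  obtain T where T: "open T" "sinterior K = sphere 0 1 \<inter> T"
    using openin_interior_of[of "top_of_set (sphere 0 1)" K] unfolding sinterior_def openin_open
    by blast
  then have "X \<in> T" using assms by blast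
  then obtain r where "0 < r" "ball X r \<subseteq> T" using T(1) open_contains_ball by blast
  then have "sphere 0 1 \<inter> ball X r \<subseteq> sinterior K" using T(2) by blast
  then show ?thesis using that \<open>0 < r\<close> sinterior_subset by blast
qed

lemma spherical_convex_body_compact:
  assumes "spherical_convex_body K"
  shows "compact K"
proof -
  have "closed K" "K \<subseteq> sphere 0 1"
    using assms spherically_convex_subset_sphere by (auto simp: spherical_convex_body_def)
  then show ?thesis by (metis bounded_sphere bounded_subset compact_eq_bounded_closed)
qed

lemma sboundary_subset:
  assumes "closed K"
  shows "sboundary K \<subseteq> K"
proof -
  have "closedin (top_of_set (sphere 0 1)) (sphere 0 1 \<inter> K)"
    using assms by (rule closedin_closed_Int)
  then have "top_of_set (sphere 0 1) closure_of K = sphere 0 1 \<inter> K"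
    using closure_of_restrict[of "top_of_set (sphere 0 1)" K] closure_of_closedin by simp
  then show ?thesis by (auto simp: sboundary_def frontier_of_def)
qed

text \<open>Otherwise tilting \<open>X\<close> slightly away from \<open>Y\<close> would leave the hemisphere centred at \<open>Y\<close>
  without leaving \<open>K\<close>.\<close>

lemma inner_pos_of_sinterior:
  fixes K :: "'a::euclidean_space set"
  assumes K: "K \<subseteq> sphere 0 1" and X: "X \<in> sinterior K" and Y: "Y \<in> spolar K"
  shows "0 < X \<bullet> Y"
proof (rule ccontr)
  have nY: "norm Y = 1" and hemi: "\<forall>Z\<in>K. 0 \<le> Z \<bullet> Y" using Y by (simp_all add: mem_spolar_iff)
  obtain r where r: "0 < r" "sphere 0 1 \<inter> ball X r \<subseteq> K" using sinterior_ball[OF X] .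
  have XK: "X \<in> K" using X sinterior_subset by blast
  then have nX: "norm X = 1" using K by auto
  assume "\<not> 0 < X \<bullet> Y"
  then have XY: "X \<bullet> - Y = 0" using hemi XK by force
  define b where "b = min 1 (r/3)"
  have b: "0 < b" "b \<le> 1" "2 * b < r" using r by (auto simp: b_def)
  have "norm (tilt X (- Y) b) = 1" using norm_tilt[OF nX _ XY] nY b by simp
  moreover have "dist X (tilt X (- Y) b) < r"
    using norm_tilt_minus_le[OF nX, of "- Y" b] nY b by (simp add: dist_norm norm_minus_commute)
  ultimately have "tilt X (- Y) b \<in> K" using r by auto
  moreover have "tilt X (- Y) b \<bullet> Y = - b"
    using XY nY by (simp add: tilt_def inner_diff_left dot_square_norm)
  ultimately show False using hemi b by force
qed

lemma inner_spolar_gt_minus_1: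
  fixes K :: "'a::euclidean_space set"
  assumes K: "K \<subseteq> sphere 0 1" "sinterior K \<noteq> {}" and XY: "X \<in> spolar K" "Y \<in> spolar K"
  shows "- 1 < X \<bullet> Y"
proof -
  have nX: "norm X = 1" and nY: "norm Y = 1" using XY by (simp_all add: mem_spolar_iff)
  obtain c where c: "c \<in> sinterior K" using K(2) by blast
  have "Y \<noteq> - X"
    using inner_pos_of_sinterior[OF K(1) c XY(1)] inner_pos_of_sinterior[OF K(1) c XY(2)]
    by auto
  then have "X \<bullet> - Y \<noteq> 1" using unit_eq_if_inner_eq_1[of X "- Y"] nX nY by force
  then show ?thesis using abs_inner_unit_le_1[OF nX nY] by (simp add: abs_le_iff)
qed

lemma sphere_ball_subset_spolar:
  assumes "K \<subseteq> sphere 0 1" "\<forall>P\<in>K. \<mu> \<le> P \<bullet> X"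
  shows "sphere 0 1 \<inter> ball X \<mu> \<subseteq> spolar K"
proof
  fix Y assume Y: "Y \<in> sphere 0 1 \<inter> ball X \<mu>"
  have "0 \<le> P \<bullet> Y" if P: "P \<in> K" for P
  proof -
    have "\<bar>P \<bullet> (Y - X)\<bar> \<le> norm P * norm (Y - X)" by (rule Cauchy_Schwarz_ineq2)
    also have "\<dots> < \<mu>" using Y P assms(1) by (auto simp: dist_norm norm_minus_commute)
    finally have "\<bar>P \<bullet> Y - P \<bullet> X\<bar> < \<mu>" by (simp add: inner_diff_right)
    moreover have "\<mu> \<le> P \<bullet> X" using assms(2) P by blast
    ultimately show ?thesis by arith
  qed
  then show "Y \<in> spolar K" using Y by (simp add: mem_spolar_iff)
qed

section \<open>Farthest pairs\<close>

lemma exists_minimal_pair: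
  fixes K :: "'a::euclidean_space set"
  assumes "compact K" "K \<noteq> {}"
  obtains P Q where "P \<in> K" "Q \<in> K" "\<forall>X\<in>K. \<forall>Y\<in>K. P \<bullet> Q \<le> X \<bullet> Y"
proof -
  have cpt: "compact (K \<times> K)" and ne: "K \<times> K \<noteq> {}"
    using assms by (simp_all add: compact_Times)
  have "continuous_on (K \<times> K) (\<lambda>z. fst z \<bullet> snd z)" by (intro continuous_intros)
  then obtain z where z: "z \<in> K \<times> K" and min: "\<forall>y\<in>K \<times> K. fst z \<bullet> snd z \<le> fst y \<bullet> snd y"
    using continuous_attains_inf[OF cpt ne] by blast
  have "fst z \<bullet> snd z \<le> X \<bullet> Y" if "X \<in> K" "Y \<in> K" for X Y
    using min that by (metis fst_conv snd_conv mem_Times_iff)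
  then show thesis using that[of "fst z" "snd z"] z by (simp add: mem_Times_iff)
qed

lemma tilt_towards_mem:
  fixes K :: "'a::euclidean_space set"
  assumes K: "spherically_convex K" and P: "P \<in> K" and Z: "Z \<in> K"
    and b: "0 < b" "b \<le> 1/2" "b \<le> norm (Z - (Z \<bullet> P) *\<^sub>R P) / 2"
  shows "tilt P (sgn (Z - (Z \<bullet> P) *\<^sub>R P)) b \<in> K"
proof -
  have nP: "norm P = 1" and nZ: "norm Z = 1"
    using spherically_convex_subset_sphere[OF K] P Z by auto
  define \<beta> where "\<beta> = Z \<bullet> P"
  define \<rho> where "\<rho> = norm (Z - \<beta> *\<^sub>R P)"
  have \<rho>: "0 < \<rho>" unfolding \<rho>_def \<beta>_def using b by linarith
  have Pv: "P \<bullet> sgn (Z - \<beta> *\<^sub>R P) = 0"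
    using nP by (simp add: \<beta>_def sgn_div_norm inner_diff_right dot_square_norm inner_commute)
  have T: "tilt P (sgn (Z - \<beta> *\<^sub>R P)) b = (sqrt (1 - b\<^sup>2) - b * \<beta> / \<rho>) *\<^sub>R P + (b / \<rho>) *\<^sub>R Z"
    using \<rho> by (simp add: tilt_def \<rho>_def sgn_div_norm algebra_simps divide_inverse scaleR_diff_right)
  have "b * \<beta> / \<rho> \<le> b / \<rho>"
    using abs_inner_unit_le_1[OF nZ nP] b \<rho> by (simp add: \<beta>_def divide_right_mono)
  also have "\<dots> \<le> 1/2" using b \<rho> by (simp add: divide_le_eq \<rho>_def \<beta>_def)
  also have "\<dots> \<le> sqrt (1 - b\<^sup>2)"
  proof -
    have "b * b \<le> (1/2) * (1/2)" using b by (intro mult_mono) auto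
    then show ?thesis using sqrt_one_minus_square_bounds[of b] b by (simp add: power2_eq_square)
  qed
  finally have "0 \<le> sqrt (1 - b\<^sup>2) - b * \<beta> / \<rho>" by simp
  moreover have "norm (tilt P (sgn (Z - \<beta> *\<^sub>R P)) b) = 1"
    using norm_tilt[OF nP _ Pv] \<rho> b by (simp add: \<rho>_def norm_sgn)
  ultimately show ?thesis
    using spherically_convex_sgn_combination[OF K P Z, of "sqrt (1 - b\<^sup>2) - b * \<beta> / \<rho>" "b / \<rho>"]
      b \<rho> T by (force simp: sgn_div_norm \<beta>_def)
qed

text \<open>Otherwise tilting \<open>P\<close> slightly towards \<open>Z\<close> would move it farther away from \<open>Q\<close>.\<close>

lemma minimal_pair_supporting:
  fixes K :: "'a::euclidean_space set"
  assumes K: "spherically_convex K" and P: "P \<in> K" and Q: "Q \<in> K"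
    and min: "\<forall>X\<in>K. \<forall>Y\<in>K. P \<bullet> Q \<le> X \<bullet> Y" and Z: "Z \<in> K"
  shows "0 \<le> Z \<bullet> (Q - (P \<bullet> Q) *\<^sub>R P)"
proof (rule ccontr)
  have nP: "norm P = 1" and nQ: "norm Q = 1"
    using spherically_convex_subset_sphere[OF K] P Q by auto
  define v where "v = Z - (Z \<bullet> P) *\<^sub>R P"
  define d where "d = v \<bullet> Q"
  assume "\<not> 0 \<le> Z \<bullet> (Q - (P \<bullet> Q) *\<^sub>R P)"
  moreover have "d = Z \<bullet> (Q - (P \<bullet> Q) *\<^sub>R P)"
    by (simp add: d_def v_def inner_diff_left inner_diff_right algebra_simps)
  ultimately have "d < 0" by simp
  then have \<rho>: "0 < norm v" by (auto simp: d_def)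
  define b where "b = min (1/2) (min (- d / (2 * norm v)) (norm v / 2))"
  have b: "0 < b" "b \<le> 1/2" "b \<le> - d / (2 * norm v)" "b \<le> norm v / 2"
    using \<open>d < 0\<close> \<rho> by (auto simp: b_def divide_neg_pos)
  have "tilt P (sgn v) b \<in> K"
    unfolding v_def using tilt_towards_mem[OF K P Z b(1,2) b(4)[unfolded v_def]] .
  then have "P \<bullet> Q \<le> tilt P (sgn v) b \<bullet> Q" using min Q by blast
  moreover have "sgn v \<bullet> Q = d / norm v" by (simp add: d_def sgn_div_norm divide_inverse_commute)
  ultimately have "P \<bullet> Q \<le> P \<bullet> Q + b * (d / norm v) + b\<^sup>2"
    using inner_tilt_approx[OF nP nQ, of b "sgn v"] b by (simp add: abs_le_iff)
  then have "0 \<le> b * (d / norm v + b)" by (simp add: distrib_left power2_eq_square)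
  moreover have "d / norm v + b < 0"
  proof -
    have "d / norm v = d / (2 * norm v) + d / (2 * norm v)" by (simp add: field_simps)
    then have "d / norm v + b \<le> d / (2 * norm v)" using b by linarith
    also have "\<dots> < 0" using \<open>d < 0\<close> \<rho> by (simp add: divide_neg_pos)
    finally show ?thesis .
  qed
  ultimately show False using b by (simp add: zero_le_mult_iff)
qed

lemma minimal_pair_normal_in_spolar:
  fixes K :: "'a::euclidean_space set"
  assumes K: "spherically_convex K" and P: "P \<in> K" and Q: "Q \<in> K"
    and min: "\<forall>X\<in>K. \<forall>Y\<in>K. P \<bullet> Q \<le> X \<bullet> Y" and "\<bar>P \<bullet> Q\<bar> < 1"
  shows "sgn (Q - (P \<bullet> Q) *\<^sub>R P) \<in> spolar K"
proof -
  have "0 < 1 - (P \<bullet> Q)\<^sup>2" using assms(5) by (simp add: abs_square_less_1)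
  then have "Q - (P \<bullet> Q) *\<^sub>R P \<noteq> 0"
    using perp_component(2) spherically_convex_subset_sphere[OF K] P Q by fastforce
  then show ?thesis using minimal_pair_supporting[OF K P Q min]
    by (simp add: mem_spolar_iff norm_sgn sgn_div_norm)
qed

section \<open>Separation and the bipolar theorem\<close>

lemma separating_unit_direction:
  fixes M :: "'a::euclidean_space set"
  assumes "compact M" "convex M" "0 \<notin> M"
  obtains h \<beta> where "norm h = 1" "0 < \<beta>" "\<forall>x\<in>M. \<beta> \<le> h \<bullet> x"
proof -
  obtain a b where ab: "a \<noteq> 0" "0 < b" "\<forall>x\<in>M. b < a \<bullet> x"
    using separating_hyperplane_closed_0[of M] assms by (auto simp: compact_imp_closed)
  have "\<forall>x\<in>M. b / norm a \<le> sgn a \<bullet> x"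
    using ab by (auto simp: sgn_div_norm divide_inverse_commute intro!: divide_right_mono)
  then show thesis using that[of "sgn a" "b / norm a"] ab by (simp add: norm_sgn)
qed

lemma uniformly_positive_direction:
  fixes K :: "'a::euclidean_space set"
  assumes "spherically_convex K" "compact K"
  obtains h \<beta> where "norm h = 1" "0 < \<beta>" "\<forall>Q\<in>K. \<beta> \<le> h \<bullet> Q"
proof -
  have "0 \<notin> convex hull K"
    using convex_hull_subset_cone[OF assms(1)] spherically_convex_subset_sphere[OF assms(1)]
    by fastforce
  then obtain h \<beta> where "norm h = 1" "0 < \<beta>" "\<forall>x\<in>convex hull K. \<beta> \<le> h \<bullet> x"
    using separating_unit_direction assms(2) compact_convex_hull convex_convex_hull by metis
  then show thesis using that hull_inc[of _ K] by blast
qed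

lemma separate_point_spherically_convex:
  fixes K :: "'a::euclidean_space set"
  assumes K: "spherically_convex K" "compact K" and Z: "norm Z = 1" "Z \<notin> K"
  obtains h \<beta> where "norm h = 1" "0 < \<beta>" "h \<bullet> Z \<le> - \<beta>" "\<forall>y\<in>K. \<beta> \<le> h \<bullet> y"
proof (cases "K = {}")
  case True
  then show ?thesis using that[of "- Z" 1] Z by (simp add: dot_square_norm)
next
  case False
  define M where "M = convex hull (insert (- Z) K)"
  have "0 \<notin> M"
  proof
    assume "0 \<in> M"
    then obtain s y where sy: "0 \<le> s" "s \<le> 1" "y \<in> convex hull K" "0 = s *\<^sub>R (- Z) + (1 - s) *\<^sub>R y"
      unfolding M_def convex_hull_insert[OF False] by (force simp: eq_diff_eq)
    then obtain t w where tw: "0 < t" "w \<in> K" "y = t *\<^sub>R w"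
      using convex_hull_subset_cone[OF K(1)] by blast
    have nw: "norm w = 1" using spherically_convex_subset_sphere[OF K(1)] tw by auto
    have eq: "s *\<^sub>R Z = ((1 - s) * t) *\<^sub>R w" using sy tw by (simp add: algebra_simps)
    have "norm (s *\<^sub>R Z) = norm (((1 - s) * t) *\<^sub>R w)" using eq by simp
    then have "s = (1 - s) * t" using Z nw sy tw by simp
    then show False using eq sy tw Z nw by (cases "s = 0") auto
  qed
  moreover have "compact M" using K(2) by (simp add: M_def compact_convex_hull)
  ultimately obtain h \<beta> where "norm h = 1" "0 < \<beta>" "\<forall>x\<in>M. \<beta> \<le> h \<bullet> x"
    using separating_unit_direction convex_convex_hull unfolding M_def by metis
  moreover have "- Z \<in> M" "K \<subseteq> M" by (auto simp: M_def hull_inc)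
  ultimately show thesis using that[of h \<beta>] by force
qed

lemma spolar_spolar:
  fixes K :: "'a::euclidean_space set"
  assumes K: "spherically_convex K" "compact K"
  shows "spolar (spolar K) = K"
proof
  show "K \<subseteq> spolar (spolar K)"
    using spherically_convex_subset_sphere[OF K(1)]
    by (auto simp: mem_spolar_iff subset_iff) (metis inner_commute)
  show "spolar (spolar K) \<subseteq> K"
  proof
    fix Z assume Z: "Z \<in> spolar (spolar K)"
    show "Z \<in> K"
    proof (rule ccontr)
      assume "Z \<notin> K"
      then obtain h \<beta> where h: "norm h = 1" "0 < \<beta>" "h \<bullet> Z \<le> - \<beta>" "\<forall>y\<in>K. \<beta> \<le> h \<bullet> y"
        using separate_point_spherically_convex[OF K] Z by (auto simp: mem_spolar_iff)
      then have "h \<in> spolar K" by (force simp: mem_spolar_iff inner_commute)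
      then show False using Z h by (force simp: mem_spolar_iff)
    qed
  qed
qed

lemma spherical_convex_body_spolar:
  fixes K :: "'a::euclidean_space set"
  assumes K: "spherical_convex_body K"
  shows "spherical_convex_body (spolar K)"
proof -
  have sc: "spherically_convex K" using K by (simp add: spherical_convex_body_def)
  have sph: "K \<subseteq> sphere 0 1" using spherically_convex_subset_sphere[OF sc] .
  obtain c where c: "c \<in> sinterior K" using sinterior_nonempty[OF K] by blast
  have "spherically_convex (spolar K)"
  proof (rule spherically_convexI[OF spolar_subset_sphere])
    show "0 < c \<bullet> Y" if "Y \<in> spolar K" for Y
      using inner_pos_of_sinterior[OF sph c that] .
    show "sgn (l *\<^sub>R X + m *\<^sub>R Y) \<in> spolar K"
      if "X \<in> spolar K" "Y \<in> spolar K" "0 \<le> l" "0 \<le> m" "l *\<^sub>R X + m *\<^sub>R Y \<noteq> 0" for X Y l m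
      using that by (auto simp: mem_spolar_iff norm_sgn sgn_div_norm inner_add_right)
  qed
  moreover obtain h \<beta> where h: "norm h = 1" "0 < \<beta>" "\<forall>Q\<in>K. \<beta> \<le> h \<bullet> Q"
    using uniformly_positive_direction[OF sc spherical_convex_body_compact[OF K]] .
  then have "openin (top_of_set (sphere 0 1)) (sphere 0 1 \<inter> ball h \<beta>)"
    "sphere 0 1 \<inter> ball h \<beta> \<noteq> {}" "sphere 0 1 \<inter> ball h \<beta> \<subseteq> spolar K"
    using sphere_ball_subset_spolar[OF sph] by (auto simp: openin_open_Int inner_commute)
  ultimately show ?thesis using closed_spolar by (auto simp: spherical_convex_body_def)
qed

lemma sboundary_spolar:
  fixes K :: "'a::euclidean_space set"
  assumes K: "compact K" "K \<subseteq> sphere 0 1" "K \<noteq> {}" and X: "X \<in> sboundary (spolar K)"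
  shows "X \<in> spolar K" "\<exists>P\<in>K. P \<bullet> X = 0"
proof -
  show XK: "X \<in> spolar K" using X sboundary_subset[OF closed_spolar] by blast
  show "\<exists>P\<in>K. P \<bullet> X = 0"
  proof (rule ccontr)
    assume "\<not> (\<exists>P\<in>K. P \<bullet> X = 0)"
    then have pos: "\<forall>P\<in>K. 0 < P \<bullet> X" using XK by (force simp: mem_spolar_iff)
    have "continuous_on K (\<lambda>P. P \<bullet> X)" by (intro continuous_intros)
    then obtain P0 where P0: "P0 \<in> K" "\<forall>P\<in>K. P0 \<bullet> X \<le> P \<bullet> X"
      using continuous_attains_inf[OF K(1,3)] by blast
    have "sphere 0 1 \<inter> ball X (P0 \<bullet> X) \<subseteq> sinterior (spolar K)"
      unfolding sinterior_def
      using sphere_ball_subset_spolar[OF K(2)] P0 by (intro interior_of_maximal) (auto simp: openin_open_Int)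
    moreover have "X \<in> sphere 0 1 \<inter> ball X (P0 \<bullet> X)" using XK pos P0 by (simp add: mem_spolar_iff)
    ultimately show False using X by (auto simp: sboundary_def sinterior_def frontier_of_def)
  qed
qed

section \<open>Diameter in terms of inner products\<close>

lemma sdist_eq_iff:
  assumes "norm P = 1" "norm Q = 1" "0 \<le> \<tau>" "\<tau> \<le> pi"
  shows "sdist P Q = \<tau> \<longleftrightarrow> P \<bullet> Q = cos \<tau>"
  using abs_inner_unit_le_1[OF assms(1,2)] assms(3,4)
  by (auto simp: sdist_def arccos_cos abs_le_iff)

lemma sdiameter_eq_iff:
  fixes K :: "'a::euclidean_space set"
  assumes K: "compact K" "K \<subseteq> sphere 0 1" "K \<noteq> {}" and \<tau>: "0 \<le> \<tau>" "\<tau> \<le> pi"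
  shows "sdiameter K = \<tau> \<longleftrightarrow>
    (\<forall>P\<in>K. \<forall>Q\<in>K. cos \<tau> \<le> P \<bullet> Q) \<and> (\<exists>P\<in>K. \<exists>Q\<in>K. P \<bullet> Q = cos \<tau>)"
proof -
  obtain P0 Q0 where 0: "P0 \<in> K" "Q0 \<in> K" "\<forall>X\<in>K. \<forall>Y\<in>K. P0 \<bullet> Q0 \<le> X \<bullet> Y"
    using exists_minimal_pair K(1,3) by blast
  have unit: "norm X = 1" if "X \<in> K" for X using that K(2) by auto
  have "sdiameter K = sdist P0 Q0"
    unfolding sdiameter_def
  proof (rule cSup_eq_maximum)
    show "sdist P0 Q0 \<in> {sdist P Q | P Q. P \<in> K \<and> Q \<in> K}" using 0 by blast
    fix x assume "x \<in> {sdist P Q | P Q. P \<in> K \<and> Q \<in> K}"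
    then obtain X Y where "x = sdist X Y" "X \<in> K" "Y \<in> K" by blast
    moreover have "\<bar>X \<bullet> Y\<bar> \<le> 1" "\<bar>P0 \<bullet> Q0\<bar> \<le> 1"
      using abs_inner_unit_le_1 unit 0 \<open>X \<in> K\<close> \<open>Y \<in> K\<close> by auto
    ultimately show "x \<le> sdist P0 Q0" using 0 by (simp add: sdist_def arccos_le_mono)
  qed
  then have "sdiameter K = \<tau> \<longleftrightarrow> P0 \<bullet> Q0 = cos \<tau>"
    using sdist_eq_iff[OF unit unit \<tau>] 0 by simp
  also have "\<dots> \<longleftrightarrow> (\<forall>P\<in>K. \<forall>Q\<in>K. cos \<tau> \<le> P \<bullet> Q) \<and> (\<exists>P\<in>K. \<exists>Q\<in>K. P \<bullet> Q = cos \<tau>)"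
  proof
    assume "P0 \<bullet> Q0 = cos \<tau>"
    then show "(\<forall>P\<in>K. \<forall>Q\<in>K. cos \<tau> \<le> P \<bullet> Q) \<and> (\<exists>P\<in>K. \<exists>Q\<in>K. P \<bullet> Q = cos \<tau>)"
      using 0 by metis
  next
    assume "(\<forall>P\<in>K. \<forall>Q\<in>K. cos \<tau> \<le> P \<bullet> Q) \<and> (\<exists>P\<in>K. \<exists>Q\<in>K. P \<bullet> Q = cos \<tau>)"
    then show "P0 \<bullet> Q0 = cos \<tau>" using 0 by (metis order_antisym)
  qed
  finally show ?thesis .
qed

lemma constant_diameter_iff:
  fixes K :: "'a::euclidean_space set"
  assumes K: "compact K" "K \<subseteq> sphere 0 1" "K \<noteq> {}" and \<tau>: "0 \<le> \<tau>" "\<tau> \<le> pi"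
  shows "constant_diameter K \<tau> \<longleftrightarrow>
    (\<forall>P\<in>K. \<forall>Q\<in>K. cos \<tau> \<le> P \<bullet> Q) \<and> (\<exists>P\<in>K. \<exists>Q\<in>K. P \<bullet> Q = cos \<tau>) \<and>
    (\<forall>P\<in>sboundary K. \<exists>Q\<in>K. P \<bullet> Q = cos \<tau>)"
proof -
  have "norm X = 1" if "X \<in> sboundary K \<or> X \<in> K" for X
    using that sboundary_subset[OF compact_imp_closed[OF K(1)]] K(2) by auto
  then have "(\<forall>P\<in>sboundary K. \<exists>Q\<in>K. sdist P Q = \<tau>) \<longleftrightarrow>
      (\<forall>P\<in>sboundary K. \<exists>Q\<in>K. P \<bullet> Q = cos \<tau>)"
    using sdist_eq_iff[OF _ _ \<tau>] by metis
  then show ?thesis using sdiameter_eq_iff[OF K \<tau>] by (simp add: constant_diameter_def)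
qed

section \<open>Bodies of constant diameter\<close>

locale constant_diameter_body =
  fixes C :: "'a::euclidean_space set" and \<tau> :: real
  assumes body: "spherical_convex_body C" and \<tau>: "0 < \<tau>" "\<tau> < pi"
    and constant_diameter: "constant_diameter C \<tau>"
begin

lemma spherically_convex_C: "spherically_convex C"
  using body by (simp add: spherical_convex_body_def)

lemma C_subset_sphere: "C \<subseteq> sphere 0 1"
  using spherically_convex_subset_sphere[OF spherically_convex_C] .

lemma norm_mem_C: "P \<in> C \<Longrightarrow> norm P = 1"
  using C_subset_sphere by auto

lemma compact_C: "compact C"
  using spherical_convex_body_compact[OF body] .

lemma sinterior_C_nonempty: "sinterior C \<noteq> {}"
  using sinterior_nonempty[OF body] .

lemma C_nonempty: "C \<noteq> {}"
  using sinterior_C_nonempty sinterior_subset by blast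

lemma sin_pos: "0 < sin \<tau>"
  using \<tau> by (simp add: sin_gt_zero)

lemma sqrt_one_minus_cos_square: "sqrt (1 - (cos \<tau>)\<^sup>2) = sin \<tau>"
  using sin_pos by (simp add: sin_squared_eq[symmetric])

lemma abs_cos_less_1: "\<bar>cos \<tau>\<bar> < 1"
  using \<tau> cos_monotone_0_pi[of 0 \<tau>] cos_monotone_0_pi[of \<tau> pi] by (simp add: abs_less_iff)

lemma constant_diameter_inner:
  "(\<forall>P\<in>C. \<forall>Q\<in>C. cos \<tau> \<le> P \<bullet> Q) \<and> (\<exists>P\<in>C. \<exists>Q\<in>C. P \<bullet> Q = cos \<tau>) \<and>
    (\<forall>P\<in>sboundary C. \<exists>Q\<in>C. P \<bullet> Q = cos \<tau>)"
  using constant_diameter constant_diameter_iff[OF compact_C C_subset_sphere C_nonempty] \<tau> by simp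

lemma cos_le_inner: "P \<in> C \<Longrightarrow> Q \<in> C \<Longrightarrow> cos \<tau> \<le> P \<bullet> Q"
  using constant_diameter_inner by blast

lemma diametral_pair: "\<exists>P\<in>C. \<exists>Q\<in>C. P \<bullet> Q = cos \<tau>"
  using constant_diameter_inner by blast

lemma boundary_partner: "P \<in> sboundary C \<Longrightarrow> \<exists>Q\<in>C. P \<bullet> Q = cos \<tau>"
  using constant_diameter_inner by blast

lemma cos_less_inner_of_sinterior:
  assumes X: "X \<in> sinterior C" and Q: "Q \<in> C"
  shows "cos \<tau> < X \<bullet> Q"
proof (rule ccontr)
  have XC: "X \<in> C" using X sinterior_subset by blast
  assume "\<not> cos \<tau> < X \<bullet> Q"
  then have "X \<bullet> Q = cos \<tau>" using cos_le_inner[OF XC Q] by simp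
  then have "sgn (Q - (X \<bullet> Q) *\<^sub>R X) \<in> spolar C"
    using minimal_pair_normal_in_spolar[OF spherically_convex_C XC Q] cos_le_inner abs_cos_less_1
    by simp
  then have "0 < X \<bullet> sgn (Q - (X \<bullet> Q) *\<^sub>R X)" by (rule inner_pos_of_sinterior[OF C_subset_sphere X])
  moreover have "X \<bullet> sgn (Q - (X \<bullet> Q) *\<^sub>R X) = 0"
    using perp_component(1)[OF norm_mem_C[OF XC] norm_mem_C[OF Q]] by (simp add: sgn_div_norm)
  ultimately show False by simp
qed

text \<open>The cone over the intersection of the open balls of radius \<open>\<tau>\<close> centred at the points
  of \<open>C\<close>.\<close>

definition core :: "'a set" where
  "core = {y. \<forall>Q\<in>C. cos \<tau> * norm y < y \<bullet> Q}"

text \<open>For \<open>cos \<tau> \<le> 0\<close> the balls have radius at least \<open>\<pi>/2\<close> and \<open>core\<close> need not be convex;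
  \<open>hubs\<close> is a convex part of it that every point of \<open>core\<close> can reach by a segment within \<open>core\<close>.\<close>

definition hubs :: "'a set" where
  "hubs = {y. \<forall>Q\<in>C. max 0 (cos \<tau>) * norm y < y \<bullet> Q}"

lemma hubs_subset_core: "hubs \<subseteq> core"
proof
  fix y assume "y \<in> hubs"
  moreover have "cos \<tau> * norm y \<le> max 0 (cos \<tau>) * norm y" by (simp add: mult_right_mono)
  ultimately show "y \<in> core" by (force simp: hubs_def core_def)
qed

lemma convex_hubs: "convex hubs"
  unfolding hubs_def by (rule convex_norm_cone) simp

lemma sgn_mem_core:
  assumes "y \<in> core"
  shows "y \<noteq> 0" "sgn y \<in> core"
proof -
  show y0: "y \<noteq> 0" using assms C_nonempty by (auto simp: core_def)
  have "cos \<tau> < sgn y \<bullet> Q" if "Q \<in> C" for Q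
  proof -
    have "cos \<tau> * norm y < y \<bullet> Q" using assms that by (auto simp: core_def)
    then have "cos \<tau> < (y \<bullet> Q) / norm y" using y0 by (simp add: pos_less_divide_eq)
    then show ?thesis by (simp add: sgn_div_norm divide_inverse_commute)
  qed
  then show "sgn y \<in> core" using y0 by (simp add: core_def norm_sgn)
qed

lemma sphere_inter_core: "sphere 0 1 \<inter> core = sgn ` core"
proof
  show "sphere 0 1 \<inter> core \<subseteq> sgn ` core"
  proof
    fix X assume "X \<in> sphere 0 1 \<inter> core"
    then have "X = sgn X" "X \<in> core" by (simp_all add: sgn_div_norm)
    then show "X \<in> sgn ` core" by (rule image_eqI)
  qed
  show "sgn ` core \<subseteq> sphere 0 1 \<inter> core"
    using sgn_mem_core by (auto simp: norm_sgn)
qed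

lemma exists_positive_direction:
  assumes X: "norm X = 1" and XC: "\<forall>Q\<in>C. cos \<tau> \<le> X \<bullet> Q"
  obtains h where "norm h = 1" "\<forall>Q\<in>C. 0 < h \<bullet> Q" "0 \<le> X \<bullet> h"
proof -
  obtain g where g: "g \<in> spolar C" "0 < X \<bullet> g"
  proof (rule ccontr)
    assume "\<not> thesis"
    then have "\<forall>g\<in>spolar C. 0 \<le> g \<bullet> - X" using that by (force simp: inner_commute)
    then have "- X \<in> C"
      using X spolar_spolar[OF spherically_convex_C compact_C] by (force simp: mem_spolar_iff)
    then have "cos \<tau> \<le> X \<bullet> - X" using XC by blast
    then show False using X abs_cos_less_1 by (simp add: dot_square_norm)
  qed
  obtain h0 \<beta> where h0: "norm h0 = 1" "0 < \<beta>" "\<forall>Q\<in>C. \<beta> \<le> h0 \<bullet> Q"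
    using uniformly_positive_direction[OF spherically_convex_C compact_C] by blast
  define y where "y = g + ((X \<bullet> g) / 2) *\<^sub>R h0"
  have yQ: "0 < y \<bullet> Q" if "Q \<in> C" for Q
  proof -
    have "0 \<le> g \<bullet> Q" using g that by (simp add: mem_spolar_iff inner_commute)
    moreover have "0 < (X \<bullet> g) / 2 * (h0 \<bullet> Q)" using g h0 that by force
    ultimately show ?thesis by (simp add: y_def inner_add_left)
  qed
  then have "y \<noteq> 0" using C_nonempty by force
  moreover have "0 \<le> X \<bullet> y"
  proof -
    have "- 1 \<le> X \<bullet> h0" using abs_inner_unit_le_1[OF X h0(1)] by simp
    then have "(X \<bullet> g) / 2 * - 1 \<le> (X \<bullet> g) / 2 * (X \<bullet> h0)" using g by (intro mult_left_mono) auto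
    then show ?thesis using g by (simp add: y_def inner_add_right)
  qed
  ultimately show thesis
    using that[of "sgn y"] yQ by (simp add: norm_sgn sgn_div_norm)
qed

lemma exists_hub:
  assumes X: "norm X = 1" and XC: "\<forall>Q\<in>C. cos \<tau> \<le> X \<bullet> Q"
  obtains h where "norm h = 1" "h \<in> hubs" "0 < cos \<tau> \<or> 0 \<le> X \<bullet> h"
proof (cases "0 < cos \<tau>")
  case True
  obtain c where c: "c \<in> sinterior C" using sinterior_C_nonempty by blast
  then have "norm c = 1" using norm_mem_C sinterior_subset by blast
  moreover have "c \<in> hubs"
    using cos_less_inner_of_sinterior[OF c] True \<open>norm c = 1\<close> by (simp add: hubs_def)
  ultimately show thesis using that True by blast
next
  case False
  obtain h where "norm h = 1" "\<forall>Q\<in>C. 0 < h \<bullet> Q" "0 \<le> X \<bullet> h"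
    using exists_positive_direction[OF X XC] .
  moreover from this False have "h \<in> hubs" by (simp add: hubs_def max_def)
  ultimately show thesis using that by blast
qed

lemma segment_to_hub_in_core:
  assumes X: "norm X = 1" and XC: "\<forall>Q\<in>C. cos \<tau> \<le> X \<bullet> Q"
    and h: "norm h = 1" "h \<in> hubs" "0 < cos \<tau> \<or> 0 \<le> X \<bullet> h" and t: "0 < t" "t \<le> 1"
  shows "(1 - t) *\<^sub>R X + t *\<^sub>R h \<in> core"
  unfolding core_def
proof (intro CollectI ballI)
  fix Q assume Q: "Q \<in> C"
  define y where "y = (1 - t) *\<^sub>R X + t *\<^sub>R h"
  have "(1 - t) * cos \<tau> + t * max 0 (cos \<tau>) < y \<bullet> Q"
  proof -
    have "(1 - t) * cos \<tau> \<le> (1 - t) * (X \<bullet> Q)" using XC Q t by (simp add: mult_left_mono)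
    moreover have "t * max 0 (cos \<tau>) < t * (h \<bullet> Q)" using h Q t by (simp add: hubs_def)
    ultimately show ?thesis by (simp add: y_def inner_add_left)
  qed
  moreover have "cos \<tau> * norm y \<le> (1 - t) * cos \<tau> + t * max 0 (cos \<tau>)"
  proof (cases "0 < cos \<tau>")
    case True
    have "norm y \<le> (1 - t) + t"
      using norm_triangle_ineq[of "(1 - t) *\<^sub>R X" "t *\<^sub>R h"] X h t by (simp add: y_def)
    then show ?thesis using True by (simp add: mult_left_le algebra_simps)
  next
    case False
    then have "1 - t \<le> norm y"
      using norm_convex_combination_ge[OF X h(1)] h(3) t by (simp add: y_def)
    then have "cos \<tau> * norm y \<le> cos \<tau> * (1 - t)" using False by (intro mult_left_mono_neg) auto
    then show ?thesis using False by (simp add: algebra_simps max_def)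
  qed
  ultimately show "cos \<tau> * norm ((1 - t) *\<^sub>R X + t *\<^sub>R h) < ((1 - t) *\<^sub>R X + t *\<^sub>R h) \<bullet> Q"
    by (simp add: y_def)
qed

lemma link_to_hubs:
  assumes X: "X \<in> sphere 0 1 \<inter> core"
  obtains A where "connected A" "A \<subseteq> sphere 0 1 \<inter> core" "X \<in> A" "sgn ` hubs \<subseteq> A"
proof -
  have nX: "norm X = 1" and XC: "\<forall>Q\<in>C. cos \<tau> \<le> X \<bullet> Q"
    using X by (auto simp: core_def less_imp_le)
  obtain h where h: "norm h = 1" "h \<in> hubs" "0 < cos \<tau> \<or> 0 \<le> X \<bullet> h"
    using exists_hub[OF nX XC] .
  define S where "S = closed_segment X h \<union> hubs"
  have "closed_segment X h \<subseteq> core"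
  proof
    fix y assume "y \<in> closed_segment X h"
    then obtain t where "0 \<le> t" "t \<le> 1" "y = (1 - t) *\<^sub>R X + t *\<^sub>R h"
      by (auto simp: closed_segment_def)
    then show "y \<in> core" using X segment_to_hub_in_core[OF nX XC h] by (cases "t = 0") auto
  qed
  then have "S \<subseteq> core" using hubs_subset_core by (auto simp: S_def)
  have "connected S"
    unfolding S_def using h(2) by (intro connected_Un) (auto simp: convex_connected convex_hubs)
  then have "connected (sgn ` S)" using \<open>S \<subseteq> core\<close> sgn_mem_core(1) by (auto intro: connected_sgn_image)
  moreover have "sgn ` S \<subseteq> sphere 0 1 \<inter> core" using \<open>S \<subseteq> core\<close> sphere_inter_core by auto
  moreover have "X \<in> sgn ` S" using image_eqI[of X sgn X S] nX by (simp add: S_def sgn_div_norm)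
  moreover have "sgn ` hubs \<subseteq> sgn ` S" by (auto simp: S_def)
  ultimately show thesis using that by blast
qed

lemma connected_sphere_inter_core: "connected (sphere 0 1 \<inter> core)"
proof -
  obtain c where c: "c \<in> sinterior C" using sinterior_C_nonempty by blast
  have "norm c = 1" "\<forall>Q\<in>C. cos \<tau> \<le> c \<bullet> Q"
    using c norm_mem_C sinterior_subset cos_less_inner_of_sinterior less_imp_le by blast+
  then have "hubs \<noteq> {}" using exists_hub by blast
  define F where "F = {A. connected A \<and> A \<subseteq> sphere 0 1 \<inter> core \<and> sgn ` hubs \<subseteq> A}"
  have "X \<in> \<Union>F" if X: "X \<in> sphere 0 1 \<inter> core" for X
  proof -
    obtain A where "connected A" "A \<subseteq> sphere 0 1 \<inter> core" "X \<in> A" "sgn ` hubs \<subseteq> A"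
      using link_to_hubs[OF X] .
    then show ?thesis unfolding F_def by blast
  qed
  then have "\<Union>F = sphere 0 1 \<inter> core" by (auto simp: F_def)
  moreover have "connected (\<Union>F)"
    using \<open>hubs \<noteq> {}\<close> by (intro connected_Union) (auto simp: F_def)
  ultimately show ?thesis by simp
qed

lemma sphere_inter_core_subset: "sphere 0 1 \<inter> core \<subseteq> C"
proof -
  obtain c where c: "c \<in> sinterior C" using sinterior_C_nonempty by blast
  then have "c \<in> C \<inter> (sphere 0 1 \<inter> core)"
    using norm_mem_C sinterior_subset cos_less_inner_of_sinterior by (force simp: core_def)
  moreover have "(sphere 0 1 \<inter> core) \<inter> sboundary C = {}"
    using boundary_partner by (force simp: core_def)
  moreover have "connectedin (top_of_set (sphere 0 1)) (sphere 0 1 \<inter> core)"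
    using connected_sphere_inter_core by (simp add: connectedin_subtopology)
  ultimately show ?thesis
    using connectedin_Int_frontier_of[of _ "sphere 0 1 \<inter> core" C] unfolding sboundary_def by blast
qed

lemma mem_of_cos_le_inner:
  assumes X: "norm X = 1" and XC: "\<forall>Q\<in>C. cos \<tau> \<le> X \<bullet> Q"
  shows "X \<in> C"
proof -
  obtain h where h: "norm h = 1" "h \<in> hubs" "0 < cos \<tau> \<or> 0 \<le> X \<bullet> h"
    using exists_hub[OF X XC] .
  define f where "f t = sgn ((1 - t) *\<^sub>R X + t *\<^sub>R h)" for t
  have core: "(1 - t) *\<^sub>R X + t *\<^sub>R h \<in> core" if "0 < t" "t \<le> 1" for t
    using segment_to_hub_in_core[OF X XC h that] .
  have "f ` {0<..1} \<subseteq> C"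
    using core sgn_mem_core sphere_inter_core_subset by (auto simp: f_def norm_sgn)
  moreover have "continuous_on (closure {0<..1}) f"
  proof -
    have "(1 - t) *\<^sub>R X + t *\<^sub>R h \<noteq> 0" if "0 \<le> t" "t \<le> 1" for t
      using core[of t] sgn_mem_core(1) X that by (cases "t = 0") auto
    then show ?thesis unfolding f_def by (auto intro!: continuous_intros)
  qed
  ultimately have "f ` {0..1} \<subseteq> C"
    using image_closure_subset[OF _ compact_imp_closed[OF compact_C], of "{0<..1}" f] by simp
  then show ?thesis using X by (force simp: f_def sgn_div_norm)
qed

text \<open>The unit tangent vectors at \<open>P\<close> of the great circle arcs of length \<open>\<tau>\<close> from \<open>P\<close> that end
  in \<open>C\<close>.\<close>

definition partner_dirs :: "'a \<Rightarrow> 'a set" where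
  "partner_dirs P = {Y. norm Y = 1 \<and> P \<bullet> Y = 0 \<and> cos \<tau> *\<^sub>R P + sin \<tau> *\<^sub>R Y \<in> C}"

lemma partner_dirs_subset_spolar:
  assumes P: "P \<in> C"
  shows "partner_dirs P \<subseteq> spolar C"
proof
  fix Y assume "Y \<in> partner_dirs P"
  then have Y: "norm Y = 1" "P \<bullet> Y = 0" and Q: "cos \<tau> *\<^sub>R P + sin \<tau> *\<^sub>R Y \<in> C"
    by (auto simp: partner_dirs_def)
  have PQ: "P \<bullet> (cos \<tau> *\<^sub>R P + sin \<tau> *\<^sub>R Y) = cos \<tau>"
    using Y norm_mem_C[OF P] by (simp add: inner_add_right dot_square_norm)
  have "0 \<le> Z \<bullet> Y" if Z: "Z \<in> C" for Z
  proof -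
    have "0 \<le> Z \<bullet> (cos \<tau> *\<^sub>R P + sin \<tau> *\<^sub>R Y - cos \<tau> *\<^sub>R P)"
      using minimal_pair_supporting[OF spherically_convex_C P Q _ Z] cos_le_inner PQ by simp
    then show ?thesis using sin_pos by (simp add: zero_le_mult_iff)
  qed
  then show "Y \<in> spolar C" using Y by (simp add: mem_spolar_iff)
qed

lemma compact_partner_dirs: "compact (partner_dirs P)"
proof -
  have "partner_dirs P = sphere 0 1 \<inter> {Y. P \<bullet> Y = 0} \<inter> (\<lambda>Y. cos \<tau> *\<^sub>R P + sin \<tau> *\<^sub>R Y) -` C"
    by (auto simp: partner_dirs_def)
  moreover have "closed ((\<lambda>Y. cos \<tau> *\<^sub>R P + sin \<tau> *\<^sub>R Y) -` C)"
    using compact_imp_closed[OF compact_C] by (rule continuous_closed_vimage) (intro continuous_intros)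
  ultimately show ?thesis
    by (metis closed_hyperplane compact_Int_closed compact_sphere inf_assoc)
qed

text \<open>For \<open>\<tau> > \<pi>/2\<close> the midpoint of two distinct partners of \<open>P\<close> would be farther than \<open>\<tau>\<close>
  from \<open>P\<close>.\<close>

lemma partner_dirs_eq_if_cos_neg:
  assumes c: "cos \<tau> < 0" and P: "P \<in> C" and Y: "Y1 \<in> partner_dirs P" "Y2 \<in> partner_dirs P"
  shows "Y1 = Y2"
proof (rule ccontr)
  define Q1 where "Q1 = cos \<tau> *\<^sub>R P + sin \<tau> *\<^sub>R Y1"
  define Q2 where "Q2 = cos \<tau> *\<^sub>R P + sin \<tau> *\<^sub>R Y2"
  have Q: "Q1 \<in> C" "Q2 \<in> C" using Y by (simp_all add: partner_dirs_def Q1_def Q2_def)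
  have nQ: "norm Q1 = 1" "norm Q2 = 1" using Q norm_mem_C by auto
  have PQ: "P \<bullet> (Q1 + Q2) = 2 * cos \<tau>"
    using Y norm_mem_C[OF P] by (simp add: partner_dirs_def Q1_def Q2_def inner_add_right dot_square_norm)
  assume "Y1 \<noteq> Y2"
  then have "Q1 \<noteq> Q2" using sin_pos by (simp add: Q1_def Q2_def)
  then have "Q1 \<bullet> Q2 < 1"
    using unit_eq_if_inner_eq_1[OF nQ] abs_inner_unit_le_1[OF nQ] by (fastforce simp: abs_le_iff)
  have "Q1 \<bullet> Q1 = 1" "Q2 \<bullet> Q2 = 1" using nQ by (simp_all add: dot_square_norm)
  then have "(norm (Q1 + Q2))\<^sup>2 = 2 + 2 * (Q1 \<bullet> Q2)"
    by (simp add: power2_norm_eq_inner inner_add_left inner_add_right inner_commute[of Q2 Q1])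
  then have "(norm (Q1 + Q2))\<^sup>2 < 2\<^sup>2" using \<open>Q1 \<bullet> Q2 < 1\<close> by simp
  then have r: "norm (Q1 + Q2) < 2" by (rule power2_less_imp_less) simp
  have "Q1 + Q2 \<noteq> 0"
  proof
    assume "Q1 + Q2 = 0"
    then show False using PQ c by simp
  qed
  then have "sgn (Q1 + Q2) \<in> C"
    using spherically_convex_sgn_combination[OF spherically_convex_C Q, of 1 1] by simp
  then have "cos \<tau> \<le> P \<bullet> sgn (Q1 + Q2)" by (rule cos_le_inner[OF P])
  also have "\<dots> = 2 * cos \<tau> / norm (Q1 + Q2)"
    using PQ by (simp add: sgn_div_norm divide_inverse_commute)
  finally have "cos \<tau> * norm (Q1 + Q2) \<le> 2 * cos \<tau>"
    using \<open>Q1 + Q2 \<noteq> 0\<close> by (simp add: le_divide_eq)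
  moreover have "cos \<tau> * 2 < cos \<tau> * norm (Q1 + Q2)" using r c by (rule mult_strict_left_mono_neg)
  ultimately show False by simp
qed

lemma partner_dirs_sgn_combination:
  assumes c: "0 \<le> cos \<tau>" and P: "P \<in> C" and Y: "Y1 \<in> partner_dirs P" "Y2 \<in> partner_dirs P"
    and ab: "0 \<le> \<alpha>" "0 \<le> \<beta>" and w: "\<alpha> *\<^sub>R Y1 + \<beta> *\<^sub>R Y2 \<noteq> 0"
  shows "sgn (\<alpha> *\<^sub>R Y1 + \<beta> *\<^sub>R Y2) \<in> partner_dirs P"
proof -
  define w where "w = \<alpha> *\<^sub>R Y1 + \<beta> *\<^sub>R Y2"
  define Q where "Q = cos \<tau> *\<^sub>R P + sin \<tau> *\<^sub>R sgn w"
  have nP: "norm P = 1" using norm_mem_C[OF P] .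
  have Y1: "norm Y1 = 1" "P \<bullet> Y1 = 0" "cos \<tau> *\<^sub>R P + sin \<tau> *\<^sub>R Y1 \<in> C"
    and Y2: "norm Y2 = 1" "P \<bullet> Y2 = 0" "cos \<tau> *\<^sub>R P + sin \<tau> *\<^sub>R Y2 \<in> C"
    using Y by (auto simp: partner_dirs_def)
  have nw: "norm (sgn w) = 1" and Pw: "P \<bullet> sgn w = 0"
    using w Y1 Y2 by (simp_all add: w_def norm_sgn sgn_div_norm inner_add_right)
  have "cos \<tau> \<le> Q \<bullet> Z" if Z: "Z \<in> C" for Z
  proof -
    define \<kappa> where "\<kappa> = cos \<tau> * (1 - Z \<bullet> P)"
    have \<kappa>: "0 \<le> \<kappa>" using c abs_inner_unit_le_1[OF norm_mem_C[OF Z] nP] by (simp add: \<kappa>_def)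
    have "\<kappa> \<le> sin \<tau> * (Z \<bullet> Y1)" "\<kappa> \<le> sin \<tau> * (Z \<bullet> Y2)"
      using cos_le_inner[OF Z Y1(3)] cos_le_inner[OF Z Y2(3)]
      by (simp_all add: \<kappa>_def inner_add_right algebra_simps)
    then have "(\<alpha> + \<beta>) * \<kappa> \<le> sin \<tau> * (Z \<bullet> w)"
      using ab by (simp add: w_def inner_add_right algebra_simps add_mono mult_left_mono)
    moreover have "norm w * \<kappa> \<le> (\<alpha> + \<beta>) * \<kappa>"
      using norm_triangle_ineq[of "\<alpha> *\<^sub>R Y1" "\<beta> *\<^sub>R Y2"] Y1 Y2 ab \<kappa>
      by (intro mult_right_mono) (auto simp: w_def)
    ultimately have "\<kappa> \<le> sin \<tau> * (Z \<bullet> w) / norm w"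
      using w by (simp add: w_def pos_le_divide_eq mult.commute)
    also have "\<dots> = sin \<tau> * (Z \<bullet> sgn w)" by (simp add: sgn_div_norm divide_inverse_commute)
    finally show ?thesis by (simp add: Q_def \<kappa>_def inner_add_left inner_commute algebra_simps)
  qed
  moreover have "norm Q = 1"
    unfolding Q_def by (rule norm_orthonormal_combination[OF nP nw Pw]) simp
  ultimately have "Q \<in> C" using mem_of_cos_le_inner by blast
  then show ?thesis using nw Pw by (simp add: partner_dirs_def Q_def w_def)
qed

lemma spherically_convex_partner_dirs:
  assumes P: "P \<in> C"
  shows "spherically_convex (partner_dirs P)"
proof -
  obtain c where c: "c \<in> sinterior C" using sinterior_C_nonempty by blast
  show ?thesis
  proof (rule spherically_convexI)
    show "partner_dirs P \<subseteq> sphere 0 1" by (auto simp: partner_dirs_def)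
    show "0 < c \<bullet> Y" if "Y \<in> partner_dirs P" for Y
      using that partner_dirs_subset_spolar[OF P] inner_pos_of_sinterior[OF C_subset_sphere c]
      by blast
    show "sgn (l *\<^sub>R X + m *\<^sub>R Y) \<in> partner_dirs P"
      if XY: "X \<in> partner_dirs P" "Y \<in> partner_dirs P" and lm: "0 \<le> l" "0 \<le> m"
        and nz: "l *\<^sub>R X + m *\<^sub>R Y \<noteq> 0" for X Y l m
    proof (cases "cos \<tau> < 0")
      case True
      then have "Y = X" using partner_dirs_eq_if_cos_neg[OF _ P XY] by simp
      then have "(l + m) *\<^sub>R X \<noteq> 0" using nz by (simp add: scaleR_add_left)
      then have "0 < l + m" "norm X = 1" using lm XY by (auto simp: partner_dirs_def)
      then show ?thesis using \<open>Y = X\<close> XY by (simp add: scaleR_add_left[symmetric] sgn_scaleR sgn_div_norm)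
    qed (use partner_dirs_sgn_combination[OF _ P XY lm nz] in simp)
  qed
qed

lemma partner_inner_ge:
  assumes P: "P \<in> C" and Z: "Z \<in> C" "Z \<bullet> P = cos \<tau>" and Pu: "P \<bullet> u = 0"
    and \<beta>: "\<forall>Y\<in>partner_dirs P. \<beta> \<le> u \<bullet> Y"
  shows "sin \<tau> * \<beta> \<le> Z \<bullet> u"
proof -
  define v where "v = Z - (P \<bullet> Z) *\<^sub>R P"
  have Pv: "P \<bullet> v = 0" and nv: "norm v = sin \<tau>"
    using perp_component[OF norm_mem_C[OF P] norm_mem_C[OF Z(1)]] Z(2) sqrt_one_minus_cos_square
    by (simp_all add: v_def inner_commute)
  then have "sgn v \<in> partner_dirs P"
    using sin_pos Z by (auto simp: partner_dirs_def norm_sgn sgn_div_norm v_def inner_commute)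
  then have "sin \<tau> * \<beta> \<le> sin \<tau> * (u \<bullet> sgn v)" using \<beta> sin_pos by (simp add: mult_left_mono)
  also have "\<dots> = Z \<bullet> u"
    using Pu nv sin_pos by (simp add: v_def sgn_div_norm inner_diff_right inner_commute)
  finally show ?thesis .
qed

lemma partner_margin:
  assumes P: "P \<in> C" and Pu: "P \<bullet> u = 0"
    and \<beta>: "0 < \<beta>" "\<forall>Y\<in>partner_dirs P. \<beta> \<le> u \<bullet> Y"
  obtains d where "0 < d" "\<forall>Z\<in>C. Z \<bullet> u \<le> sin \<tau> * \<beta> / 2 \<longrightarrow> cos \<tau> + d \<le> Z \<bullet> P"
proof (cases "C \<inter> {Z. Z \<bullet> u \<le> sin \<tau> * \<beta> / 2} = {}")
  case True
  then show thesis using that[of 1] by auto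
next
  case False
  have cpt: "compact (C \<inter> {Z. Z \<bullet> u \<le> sin \<tau> * \<beta> / 2})"
    by (intro compact_Int_closed compact_C closed_Collect_le continuous_intros)
  have "continuous_on (C \<inter> {Z. Z \<bullet> u \<le> sin \<tau> * \<beta> / 2}) (\<lambda>Z. Z \<bullet> P)"
    by (intro continuous_intros)
  from continuous_attains_inf[OF cpt False this] obtain Z1 where Z1: "Z1 \<in> C" "Z1 \<bullet> u \<le> sin \<tau> * \<beta> / 2"
    and min: "\<forall>Z\<in>C. Z \<bullet> u \<le> sin \<tau> * \<beta> / 2 \<longrightarrow> Z1 \<bullet> P \<le> Z \<bullet> P"
    by blast
  have "Z1 \<bullet> P \<noteq> cos \<tau>"
  proof
    assume "Z1 \<bullet> P = cos \<tau>"
    then have "sin \<tau> * \<beta> \<le> Z1 \<bullet> u" using partner_inner_ge[OF P Z1(1) _ Pu \<beta>(2)] by blast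
    moreover have "0 < sin \<tau> * \<beta>" using sin_pos \<beta> by simp
    ultimately show False using Z1(2) by linarith
  qed
  show thesis
  proof (rule that)
    show "0 < Z1 \<bullet> P - cos \<tau>" using cos_le_inner[OF Z1(1) P] \<open>Z1 \<bullet> P \<noteq> cos \<tau>\<close> by simp
    show "\<forall>Z\<in>C. Z \<bullet> u \<le> sin \<tau> * \<beta> / 2 \<longrightarrow> cos \<tau> + (Z1 \<bullet> P - cos \<tau>) \<le> Z \<bullet> P"
      using min by simp
  qed
qed

lemma exists_tilt_mem:
  assumes P: "P \<in> C" and u: "norm u = 1" "P \<bullet> u = 0"
    and \<beta>: "0 < \<beta>" "\<forall>Y\<in>partner_dirs P. \<beta> \<le> u \<bullet> Y"
  obtains b where "0 < b" "tilt P u b \<in> C"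
proof -
  obtain d where d: "0 < d" "\<forall>Z\<in>C. Z \<bullet> u \<le> sin \<tau> * \<beta> / 2 \<longrightarrow> cos \<tau> + d \<le> Z \<bullet> P"
    using partner_margin[OF P u(2) \<beta>] .
  define b where "b = min (1/2) (min (sin \<tau> * \<beta> / 2) (d / 2))"
  have b: "0 < b" "b \<le> 1/2" "b \<le> sin \<tau> * \<beta> / 2" "b \<le> d / 2"
    using sin_pos \<beta> d by (auto simp: b_def)
  have nP: "norm P = 1" using norm_mem_C[OF P] .
  have "cos \<tau> \<le> tilt P u b \<bullet> Z" if Z: "Z \<in> C" for Z
  proof -
    have approx: "P \<bullet> Z + b * (u \<bullet> Z) - b\<^sup>2 \<le> tilt P u b \<bullet> Z"
      using inner_tilt_approx[OF nP norm_mem_C[OF Z], of b u] b by (simp add: abs_le_iff)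
    have bb: "b\<^sup>2 \<le> b * (1/2)" using b by (simp add: power2_eq_square mult_left_mono)
    show ?thesis
    proof (cases "Z \<bullet> u \<le> sin \<tau> * \<beta> / 2")
      case True
      then have "cos \<tau> + d \<le> P \<bullet> Z" using d Z inner_commute[of P Z] by simp
      moreover have "b * - 1 \<le> b * (u \<bullet> Z)"
        using abs_inner_unit_le_1[OF u(1) norm_mem_C[OF Z]] b by (intro mult_left_mono) auto
      ultimately show ?thesis using approx bb b by linarith
    next
      case False
      then have "b * (sin \<tau> * \<beta> / 2) \<le> b * (u \<bullet> Z)"
        using b by (simp add: inner_commute mult_left_mono)
      moreover have "b\<^sup>2 \<le> b * (sin \<tau> * \<beta> / 2)" using b by (simp add: power2_eq_square mult_left_mono)
      ultimately show ?thesis using approx cos_le_inner[OF P Z] by linarith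
    qed
  qed
  moreover have "norm (tilt P u b) = 1" using norm_tilt[OF nP u] b by simp
  ultimately show thesis using that b mem_of_cos_le_inner by blast
qed

text \<open>The point at distance \<open>\<tau>\<close> from \<open>P\<close> along the inner normal of a supporting hemisphere at
  \<open>P\<close> belongs to \<open>C\<close>.  Otherwise a direction separating \<open>X\<close> from the compact spherically convex
  set \<open>partner_dirs P\<close> would allow to tilt \<open>P\<close> out of that hemisphere within \<open>C\<close>.\<close>

lemma great_circle_partner_mem:
  assumes P: "P \<in> C" and X: "X \<in> spolar C" and PX: "P \<bullet> X = 0"
  shows "cos \<tau> *\<^sub>R P + sin \<tau> *\<^sub>R X \<in> C"
proof -
  have nX: "norm X = 1" and XC: "\<forall>Z\<in>C. 0 \<le> Z \<bullet> X" using X by (auto simp: mem_spolar_iff)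
  have nP: "norm P = 1" using norm_mem_C[OF P] .
  have "X \<in> partner_dirs P"
  proof (rule ccontr)
    assume "X \<notin> partner_dirs P"
    then obtain h \<beta> where h: "norm h = 1" "0 < \<beta>" "h \<bullet> X \<le> - \<beta>" "\<forall>Y\<in>partner_dirs P. \<beta> \<le> h \<bullet> Y"
      using separate_point_spherically_convex[OF spherically_convex_partner_dirs[OF P]
          compact_partner_dirs nX] by blast
    define v where "v = h - (h \<bullet> P) *\<^sub>R P"
    have vP: "P \<bullet> v = 0" using nP by (simp add: v_def inner_diff_right inner_commute dot_square_norm)
    have vX: "v \<bullet> X = h \<bullet> X" using PX by (simp add: v_def inner_diff_left)
    have vY: "\<forall>Y\<in>partner_dirs P. v \<bullet> Y = h \<bullet> Y"
      by (auto simp: v_def inner_diff_left partner_dirs_def)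
    have "v \<noteq> 0" using vX h by auto
    then have nv: "0 < norm v" by simp
    have u: "norm (sgn v) = 1" "P \<bullet> sgn v = 0"
      using \<open>v \<noteq> 0\<close> vP by (simp_all add: norm_sgn sgn_div_norm)
    have "\<forall>Y\<in>partner_dirs P. \<beta> / norm v \<le> sgn v \<bullet> Y"
      using vY h nv by (auto simp: sgn_div_norm divide_inverse_commute intro!: divide_right_mono)
    then obtain b where b: "0 < b" "tilt P (sgn v) b \<in> C"
      using exists_tilt_mem[OF P u] h nv by (metis divide_pos_pos)
    have "tilt P (sgn v) b \<bullet> X = b * (h \<bullet> X) / norm v"
      using PX vX by (simp add: tilt_def inner_add_left sgn_div_norm divide_inverse_commute)
    also have "\<dots> < 0" using b h nv by (simp add: divide_neg_pos mult_pos_neg)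
    finally show False using XC b by force
  qed
  then show ?thesis by (simp add: partner_dirs_def)
qed

lemma spolar_partner:
  assumes P: "P \<in> C" and X: "X \<in> spolar C" and PX: "P \<bullet> X = 0"
  shows "sin \<tau> *\<^sub>R P - cos \<tau> *\<^sub>R X \<in> spolar C" "X \<bullet> (sin \<tau> *\<^sub>R P - cos \<tau> *\<^sub>R X) = - cos \<tau>"
proof -
  define Q where "Q = cos \<tau> *\<^sub>R P + sin \<tau> *\<^sub>R X"
  have Q: "Q \<in> C" using great_circle_partner_mem[OF P X PX] by (simp add: Q_def)
  have nX: "norm X = 1" using X by (simp add: mem_spolar_iff)
  have nP: "norm P = 1" using norm_mem_C[OF P] .
  have QP: "Q \<bullet> P = cos \<tau>"
    using PX nP by (simp add: Q_def inner_add_left dot_square_norm inner_commute[of X P])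
  have "P - (Q \<bullet> P) *\<^sub>R Q = P - cos \<tau> *\<^sub>R Q" by (simp only: QP)
  also have "\<dots> = (1 - (cos \<tau>)\<^sup>2) *\<^sub>R P - (cos \<tau> * sin \<tau>) *\<^sub>R X"
    by (simp add: Q_def algebra_simps power2_eq_square)
  also have "\<dots> = sin \<tau> *\<^sub>R (sin \<tau> *\<^sub>R P - cos \<tau> *\<^sub>R X)"
    unfolding sin_squared_eq[symmetric] by (simp add: algebra_simps power2_eq_square)
  finally have "P - (Q \<bullet> P) *\<^sub>R Q = sin \<tau> *\<^sub>R (sin \<tau> *\<^sub>R P - cos \<tau> *\<^sub>R X)" .
  then have "0 \<le> Z \<bullet> (sin \<tau> *\<^sub>R P - cos \<tau> *\<^sub>R X)" if "Z \<in> C" for Z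
    using minimal_pair_supporting[OF spherically_convex_C Q P _ that] cos_le_inner QP sin_pos
    by (simp add: zero_le_mult_iff)
  moreover have "norm (sin \<tau> *\<^sub>R P - cos \<tau> *\<^sub>R X) = 1"
    using norm_orthonormal_combination[OF nP nX PX, of "sin \<tau>" "- cos \<tau>"] by simp
  ultimately show "sin \<tau> *\<^sub>R P - cos \<tau> *\<^sub>R X \<in> spolar C" by (simp add: mem_spolar_iff)
  show "X \<bullet> (sin \<tau> *\<^sub>R P - cos \<tau> *\<^sub>R X) = - cos \<tau>"
    using PX nX by (simp add: inner_diff_right inner_commute dot_square_norm)
qed

text \<open>A farthest pair \<open>X0, Y0\<close> of \<open>C\<degree>\<close> at distance more than \<open>\<pi> - \<tau>\<close> would give, through its
  normal \<open>N \<in> C\<degree>\<degree> = C\<close>, a point of \<open>C\<close> outside the hemisphere centred at \<open>Y0\<close>.\<close>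

lemma spolar_inner_ge:
  assumes "X \<in> spolar C" "Y \<in> spolar C"
  shows "- cos \<tau> \<le> X \<bullet> Y"
proof -
  obtain X0 Y0 where X0: "X0 \<in> spolar C" and Y0: "Y0 \<in> spolar C"
    and min: "\<forall>X\<in>spolar C. \<forall>Y\<in>spolar C. X0 \<bullet> Y0 \<le> X \<bullet> Y"
    using exists_minimal_pair[OF compact_spolar] assms by blast
  define e where "e = X0 \<bullet> Y0"
  have nX0: "norm X0 = 1" and nY0: "norm Y0 = 1" using X0 Y0 by (simp_all add: mem_spolar_iff)
  have "- cos \<tau> \<le> e"
  proof (rule ccontr)
    assume "\<not> - cos \<tau> \<le> e"
    then have lt: "e < - cos \<tau>" by simp
    then have e: "- 1 < e" "e < 1"
      using inner_spolar_gt_minus_1[OF C_subset_sphere sinterior_C_nonempty X0 Y0] abs_cos_less_1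
      by (auto simp: e_def)
    define N where "N = sgn (Y0 - e *\<^sub>R X0)"
    have "N \<in> spolar (spolar C)"
      using minimal_pair_normal_in_spolar[OF _ X0 Y0 min] spherical_convex_body_spolar[OF body] e
      by (simp add: N_def e_def spherical_convex_body_def)
    then have N: "N \<in> C" using spolar_spolar[OF spherically_convex_C compact_C] by simp
    have X0N: "N \<bullet> X0 = 0" and Y0N: "Y0 \<bullet> N = sqrt (1 - e\<^sup>2)"
      using perp_component[OF nX0 nY0]
      by (simp_all add: N_def e_def sgn_div_norm inner_commute)
    have "cos \<tau> *\<^sub>R N + sin \<tau> *\<^sub>R X0 \<in> C" using great_circle_partner_mem[OF N X0 X0N] .
    then have "0 \<le> (cos \<tau> *\<^sub>R N + sin \<tau> *\<^sub>R X0) \<bullet> Y0" using Y0 by (simp add: mem_spolar_iff)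
    also have "\<dots> = sin \<tau> * e + cos \<tau> * sqrt (1 - e\<^sup>2)"
      using Y0N by (simp add: inner_add_left e_def inner_commute[of N Y0])
    also have "\<dots> < 0" using sin_add_arccos_neg[OF \<tau>] e lt by simp
    finally show False by simp
  qed
  then show ?thesis using min assms by (force simp: e_def)
qed

lemma constant_diameter_spolar: "constant_diameter (spolar C) (pi - \<tau>)"
proof -
  obtain P Q where P: "P \<in> C" and Q: "Q \<in> C" and PQ: "P \<bullet> Q = cos \<tau>"
    using diametral_pair by blast
  define G where "G = sgn (Q - (P \<bullet> Q) *\<^sub>R P)"
  have G: "G \<in> spolar C" "P \<bullet> G = 0"
    using minimal_pair_normal_in_spolar[OF spherically_convex_C P Q] cos_le_inner PQ abs_cos_less_1
      perp_component(1)[OF norm_mem_C[OF P] norm_mem_C[OF Q]]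
    by (simp_all add: G_def sgn_div_norm)
  have "\<forall>X\<in>sboundary (spolar C). \<exists>Y\<in>spolar C. X \<bullet> Y = - cos \<tau>"
    using sboundary_spolar[OF compact_C C_subset_sphere C_nonempty] spolar_partner by metis
  moreover have "\<exists>X\<in>spolar C. \<exists>Y\<in>spolar C. X \<bullet> Y = - cos \<tau>"
    using spolar_partner[OF P G] G by blast
  moreover have "spolar C \<noteq> {}" using G by blast
  ultimately show ?thesis
    using constant_diameter_iff[OF compact_spolar spolar_subset_sphere, of C "pi - \<tau>"] \<tau>
      spolar_inner_ge by simp
qed

end

theorem corollary2p4:
  fixes C :: "'a::euclidean_space set" and \<tau> :: real
  assumes "spherical_convex_body C" and "0 < \<tau>" and "\<tau> < pi"
  shows "constant_diameter C \<tau> \<longleftrightarrow> constant_diameter (spolar C) (pi - \<tau>)"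
proof
  assume "constant_diameter C \<tau>"
  then interpret constant_diameter_body C \<tau> using assms by unfold_locales
  show "constant_diameter (spolar C) (pi - \<tau>)" by (rule constant_diameter_spolar)
next
  assume "constant_diameter (spolar C) (pi - \<tau>)"
  then interpret polar: constant_diameter_body "spolar C" "pi - \<tau>"
    using assms spherical_convex_body_spolar by unfold_locales auto
  have "spolar (spolar C) = C"
    using assms(1) spolar_spolar spherical_convex_body_compact[OF assms(1)]
    unfolding spherical_convex_body_def by blast
  then show "constant_diameter C \<tau>" using polar.constant_diameter_spolar by simp
qed

end
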